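(* Let $S$ be a finite state set, $A$ a finite action-profile set and $q$ a transition kernel such that for every pure Markov strategy profile $\mathbf a=(a_s)_s\in A^{|S|}$ the matrix $(q(t\mid s,a_s))_{s,t}$ is irreducible; let $\pi(\mathbf a)=(\pi_s(\mathbf a))_{s\in S}$ be its unique invariant distribution. Let $\tilde\alpha:S\to\mathbb R^{|A|}$ satisfy $\sum_{a\in A}\tilde\alpha_s(a)=1$ for each $s$, and let $\tilde\beta\in\mathbb R^{|S|}$ satisfy $\sum_{s\in S}\sum_{a\in A}\tilde\beta_s\tilde\alpha_s(a)q(t\mid s,a)=\tilde\beta_t$ for every $t\in S$. Then there exists $k:A^{|S|}\to\mathbb R$ such that $$\tilde\beta_s\tilde\alpha_s(a)=\sum_{\mathbf a=(a_{s'})_{s'}\in A^{|S|}:\,a_s=a}k(\mathbf a)\,\pi_s(\mathbf a)\quad\text{for all } s\in S,\ a\in A.$$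
   Context: The entries $\tilde\alpha_s(a)$ may be negative. *)

theory Defs
  imports Complex_Main
begin

text \<open>A transition kernel: q s a t is the probability q(t | s, a).\<close>
definition transition_kernel :: "('s::finite \<Rightarrow> 'a \<Rightarrow> 's \<Rightarrow> real) \<Rightarrow> bool" where
  "transition_kernel q \<longleftrightarrow> (\<forall>s a t. q s a t \<ge> 0) \<and> (\<forall>s a. (\<Sum>t\<in>UNIV. q s a t) = 1)"

definition irreducible_matrix :: "('s::finite \<Rightarrow> 's \<Rightarrow> real) \<Rightarrow> bool" where
  "irreducible_matrix P \<longleftrightarrow> (\<forall>s t. (s, t) \<in> {(x, y). P x y > 0}\<^sup>+)"

definition profile_matrix :: "('s \<Rightarrow> 'a \<Rightarrow> 's \<Rightarrow> real) \<Rightarrow> ('s \<Rightarrow> 'a) \<Rightarrow> 's \<Rightarrow> 's \<Rightarrow> real" where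
  "profile_matrix q as s t = q s (as s) t"

definition invariant_distribution :: "('s::finite \<Rightarrow> 's \<Rightarrow> real) \<Rightarrow> ('s \<Rightarrow> real) \<Rightarrow> bool" where
  "invariant_distribution P p \<longleftrightarrow> (\<forall>s. p s \<ge> 0) \<and> (\<Sum>s\<in>UNIV. p s) = 1
     \<and> (\<forall>t. (\<Sum>s\<in>UNIV. p s * P s t) = p t)"

end

theory Submission
  imports Defs
begin

text \<open>Fix any base profile b. Every state-action pair (s, a) with a \<noteq> b s is hit by exactly one
  profile deviating from b in a single state, namely b(s := a), and putting the right weight on
  these profiles matches beta s * alpha s a off the graph of b. The remaining discrepancy lives on
  the graph of b and still satisfies the balance equations, so it is an invariant vector of the
  irreducible matrix of b, hence a multiple of pi b, which is absorbed by a weight on b itself.\<close>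

definition occupation :: "(('s \<Rightarrow> 'a) \<Rightarrow> 's \<Rightarrow> real) \<Rightarrow> (('s \<Rightarrow> 'a) \<Rightarrow> real) \<Rightarrow> 's \<Rightarrow> 'a \<Rightarrow> real"
  where "occupation p k s a = (\<Sum>as\<in>{as. as s = a}. k as * p as s)"

definition balanced :: "('s::finite \<Rightarrow> 'a::finite \<Rightarrow> 's \<Rightarrow> real) \<Rightarrow> ('s \<Rightarrow> 'a \<Rightarrow> real) \<Rightarrow> bool"
  where "balanced q x \<longleftrightarrow> (\<forall>t. (\<Sum>s\<in>UNIV. \<Sum>a\<in>UNIV. x s a * q s a t) = (\<Sum>a\<in>UNIV. x t a))"

lemma profile_matrix_nonneg:
  assumes "transition_kernel q"
  shows "profile_matrix q as s t \<ge> 0"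
  using assms unfolding transition_kernel_def profile_matrix_def by simp

lemma nonneg_invariant_zero_trancl:
  fixes P :: "'s::finite \<Rightarrow> 's \<Rightarrow> real"
  assumes P_nonneg: "\<And>s t. P s t \<ge> 0" and w_nonneg: "\<And>s. w s \<ge> 0"
    and w_inv: "\<And>t. (\<Sum>s\<in>UNIV. w s * P s t) = w t"
    and path: "(s, t) \<in> {(x, y). P x y > 0}\<^sup>+" and "w t = 0"
  shows "w s = 0"
proof -
  have zero_pred: "w u = 0" if "P u v > 0" "w v = 0" for u v
  proof -
    have "(\<Sum>s'\<in>UNIV. w s' * P s' v) = 0" using w_inv \<open>w v = 0\<close> by simp
    then have "w u * P u v = 0"
      using P_nonneg w_nonneg by (simp add: sum_nonneg_eq_0_iff)
    with \<open>P u v > 0\<close> show ?thesis by simp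
  qed
  from path \<open>w t = 0\<close> show ?thesis
    by (induction rule: trancl_induct) (auto intro: zero_pred)
qed

lemma invariant_distribution_pos:
  fixes P :: "'s::finite \<Rightarrow> 's \<Rightarrow> real"
  assumes P_nonneg: "\<And>s t. P s t \<ge> 0" and irr: "irreducible_matrix P"
    and inv: "invariant_distribution P p"
  shows "p s > 0"
proof (rule ccontr)
  assume "\<not> p s > 0"
  moreover have "p s \<ge> 0" using inv unfolding invariant_distribution_def by blast
  ultimately have "p s = 0" by simp
  then have "p s' = 0" for s'
    using nonneg_invariant_zero_trancl[of P p s' s] P_nonneg inv irr
    unfolding invariant_distribution_def irreducible_matrix_def by blast
  with inv show False unfolding invariant_distribution_def by simp
qed

text \<open>Subtracting the largest multiple of p below z leaves a nonnegative invariant vector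
  vanishing somewhere, hence everywhere by irreducibility.\<close>
lemma invariant_vector_proportional:
  fixes P :: "'s::finite \<Rightarrow> 's \<Rightarrow> real"
  assumes P_nonneg: "\<And>s t. P s t \<ge> 0" and irr: "irreducible_matrix P"
    and inv: "invariant_distribution P p"
    and z_inv: "\<And>t. (\<Sum>s\<in>UNIV. z s * P s t) = z t"
  shows "\<exists>c. \<forall>s. z s = c * p s"
proof -
  have p_pos: "p s > 0" for s using invariant_distribution_pos[OF P_nonneg irr inv] .
  define c where "c = Min (range (\<lambda>s. z s / p s))"
  have "c \<in> range (\<lambda>s. z s / p s)" unfolding c_def by (rule Min_in) auto
  then obtain s0 where s0: "c = z s0 / p s0" by blast
  define w where "w s = z s - c * p s" for s
  have "c \<le> z s / p s" for s unfolding c_def by simp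
  then have w_nonneg: "w s \<ge> 0" for s
    using p_pos unfolding w_def by (simp add: pos_le_divide_eq)
  have w_inv: "(\<Sum>s\<in>UNIV. w s * P s t) = w t" for t
  proof -
    have "(\<Sum>s\<in>UNIV. w s * P s t) = (\<Sum>s\<in>UNIV. z s * P s t) - c * (\<Sum>s\<in>UNIV. p s * P s t)"
      unfolding w_def by (simp add: algebra_simps sum_subtractf sum_distrib_left)
    with z_inv inv show ?thesis unfolding w_def invariant_distribution_def by simp
  qed
  have "w s0 = 0" using s0 p_pos[of s0] unfolding w_def by simp
  then have "w s = 0" for s
    using nonneg_invariant_zero_trancl[OF P_nonneg w_nonneg w_inv] irr
    unfolding irreducible_matrix_def by blast
  then show ?thesis unfolding w_def by auto
qed

lemma sum_profiles_by_action:
  fixes h :: "('s \<Rightarrow> 'a::finite) \<Rightarrow> 'a \<Rightarrow> real"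
  assumes "finite (UNIV :: ('s \<Rightarrow> 'a) set)"
  shows "(\<Sum>a\<in>UNIV. \<Sum>as\<in>{as. as s = a}. h as a) = (\<Sum>as\<in>UNIV. h as (as s))"
proof -
  have "(\<Sum>a\<in>UNIV. \<Sum>as\<in>{as. as s = a}. h as a)
      = (\<Sum>a\<in>UNIV. \<Sum>as\<in>UNIV. if as s = a then h as a else 0)"
    using assms by (simp add: sum.If_cases)
  also have "\<dots> = (\<Sum>as\<in>UNIV. \<Sum>a\<in>UNIV. if as s = a then h as a else 0)"
    by (rule sum.swap)
  also have "\<dots> = (\<Sum>as\<in>UNIV. h as (as s))"
    by (simp add: eq_commute[of "_ s"])
  finally show ?thesis .
qed

lemma occupation_balanced:
  fixes q :: "'s::finite \<Rightarrow> 'a::finite \<Rightarrow> 's \<Rightarrow> real"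
  assumes inv: "\<And>as. invariant_distribution (profile_matrix q as) (p as)"
  shows "balanced q (occupation p k)"
  unfolding balanced_def
proof
  fix t
  have "(\<Sum>s\<in>UNIV. \<Sum>a\<in>UNIV. occupation p k s a * q s a t)
      = (\<Sum>s\<in>UNIV. \<Sum>a\<in>UNIV. \<Sum>as\<in>{as. as s = a}. k as * p as s * q s a t)"
    by (simp add: occupation_def sum_distrib_right)
  also have "\<dots> = (\<Sum>s\<in>UNIV. \<Sum>as\<in>UNIV. k as * p as s * q s (as s) t)"
    by (simp add: sum_profiles_by_action)
  also have "\<dots> = (\<Sum>as\<in>UNIV. k as * (\<Sum>s\<in>UNIV. p as s * q s (as s) t))"
    by (subst sum.swap) (simp add: sum_distrib_left mult.assoc)
  also have "\<dots> = (\<Sum>as\<in>UNIV. k as * p as t)"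
    using inv unfolding invariant_distribution_def profile_matrix_def by simp
  also have "\<dots> = (\<Sum>a\<in>UNIV. occupation p k t a)"
    by (simp add: occupation_def sum_profiles_by_action)
  finally show "(\<Sum>s\<in>UNIV. \<Sum>a\<in>UNIV. occupation p k s a * q s a t)
    = (\<Sum>a\<in>UNIV. occupation p k t a)" .
qed

lemma balanced_diff:
  assumes "balanced q x" "balanced q y"
  shows "balanced q (\<lambda>s a. x s a - y s a)"
  using assms by (simp add: balanced_def left_diff_distrib sum_subtractf)

lemma balanced_supported_on_profile:
  fixes q :: "'s::finite \<Rightarrow> 'a::finite \<Rightarrow> 's \<Rightarrow> real"
  assumes kernel: "transition_kernel q"
    and irr: "irreducible_matrix (profile_matrix q b)"
    and inv: "invariant_distribution (profile_matrix q b) p"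
    and bal: "balanced q y" and supp: "\<And>s a. a \<noteq> b s \<Longrightarrow> y s a = 0"
  shows "\<exists>c. \<forall>s. y s (b s) = c * p s"
proof (rule invariant_vector_proportional[OF profile_matrix_nonneg[OF kernel] irr inv])
  fix t
  have row: "(\<Sum>a\<in>UNIV. y s a * f a) = y s (b s) * f (b s)" for s and f :: "'a \<Rightarrow> real"
    by (subst sum.remove[of _ "b s"]) (auto intro!: sum.neutral simp: supp)
  have "(\<Sum>s\<in>UNIV. \<Sum>a\<in>UNIV. y s a * q s a t) = (\<Sum>a\<in>UNIV. y t a)"
    using bal unfolding balanced_def by blast
  with row[of t "\<lambda>_. 1"] row[of _ "\<lambda>a. q _ a t"]
  show "(\<Sum>s\<in>UNIV. y s (b s) * profile_matrix q b s t) = y t (b t)"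
    unfolding profile_matrix_def by simp
qed

lemma occupation_add:
  "occupation p (\<lambda>as. k as + k' as) s a = occupation p k s a + occupation p k' s a"
  by (simp add: occupation_def distrib_right sum.distrib)

lemma occupation_sum:
  "occupation p (\<lambda>as. \<Sum>i\<in>I. k i as) s a = (\<Sum>i\<in>I. occupation p (k i) s a)"
  by (simp add: occupation_def sum_distrib_right sum.swap[of _ I])

lemma occupation_point:
  fixes b :: "'s \<Rightarrow> 'a"
  assumes "finite (UNIV :: ('s \<Rightarrow> 'a) set)"
  shows "occupation p (\<lambda>as. if as = b then c else 0) s a = (if b s = a then c * p b s else 0)"
proof -
  have "occupation p (\<lambda>as. if as = b then c else 0) s a
      = (\<Sum>as\<in>{as. as s = a}. if as = b then c * p b s else 0)"
    unfolding occupation_def by (rule sum.cong) auto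
  also have "\<dots> = (if b s = a then c * p b s else 0)"
    using finite_subset[OF subset_UNIV assms] by (simp add: sum.delta)
  finally show ?thesis .
qed

lemma occupation_single_deviations:
  fixes b :: "'s::finite \<Rightarrow> 'a::finite" and w :: "'s \<Rightarrow> 'a \<Rightarrow> real"
  assumes "e \<noteq> b t"
  shows "occupation p (\<lambda>as. \<Sum>s\<in>UNIV. \<Sum>a\<in>-{b s}. if as = b(s := a) then w s a else 0) t e
    = w t e * p (b(t := e)) t"
proof -
  have deviation: "(\<Sum>a\<in>-{b s}. if (b(s := a)) t = e then w s a * p (b(s := a)) t else 0)
      = (if s = t then w t e * p (b(t := e)) t else 0)" for s
    using assms by (cases "s = t") (auto simp: sum.delta')
  have "occupation p (\<lambda>as. \<Sum>s\<in>UNIV. \<Sum>a\<in>-{b s}. if as = b(s := a) then w s a else 0) t e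
      = (\<Sum>s\<in>UNIV. \<Sum>a\<in>-{b s}. if (b(s := a)) t = e then w s a * p (b(s := a)) t else 0)"
    by (simp add: occupation_sum occupation_point del: fun_upd_apply)
  also have "\<dots> = w t e * p (b(t := e)) t"
    by (simp only: deviation) (simp add: sum.delta')
  finally show ?thesis .
qed

theorem mainTheorem4:
  fixes q :: "'s::finite \<Rightarrow> 'a::finite \<Rightarrow> 's \<Rightarrow> real"
    and pi :: "('s \<Rightarrow> 'a) \<Rightarrow> 's \<Rightarrow> real"
    and alpha :: "'s \<Rightarrow> 'a \<Rightarrow> real"
    and beta :: "'s \<Rightarrow> real"
  assumes kernel: "transition_kernel q"
    and irred: "\<And>as. irreducible_matrix (profile_matrix q as)"
    and inv: "\<And>as. invariant_distribution (profile_matrix q as) (pi as)"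
    and alpha_sum: "\<And>s. (\<Sum>a\<in>UNIV. alpha s a) = 1"
    and beta_inv: "\<And>t. (\<Sum>s\<in>UNIV. \<Sum>a\<in>UNIV. beta s * alpha s a * q s a t) = beta t"
  shows "\<exists>k :: ('s \<Rightarrow> 'a) \<Rightarrow> real. \<forall>s a.
           beta s * alpha s a = (\<Sum>as\<in>{as. as s = a}. k as * pi as s)"
proof -
  define x where "x s a = beta s * alpha s a" for s a
  have "balanced q x"
    using beta_inv alpha_sum by (simp add: balanced_def x_def sum_distrib_left[symmetric])
  define b :: "'s \<Rightarrow> 'a" where "b = (\<lambda>_. undefined)"
  define k' where "k' as = (\<Sum>s\<in>UNIV. \<Sum>a\<in>-{b s}.
      if as = b(s := a) then x s a / pi (b(s := a)) s else 0)" for as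
  have off_b: "occupation pi k' t e = x t e" if "e \<noteq> b t" for t e
    using occupation_single_deviations[where w = "\<lambda>s a. x s a / pi (b(s := a)) s"
        and p = pi and b = b and t = t and e = e, OF that]
      invariant_distribution_pos[OF profile_matrix_nonneg[OF kernel] irred inv, of "b(t := e)" t]
    unfolding k'_def by simp
  define y where "y s a = x s a - occupation pi k' s a" for s a
  have "balanced q y"
    unfolding y_def by (rule balanced_diff[OF \<open>balanced q x\<close> occupation_balanced[OF inv]])
  then obtain c where c: "\<And>s. y s (b s) = c * pi b s"
    using balanced_supported_on_profile[OF kernel irred inv] off_b unfolding y_def by force
  define k where "k = (\<lambda>as. (if as = b then c else 0) + k' as)"
  have "occupation pi k t e = x t e" for t e
    using c[of t] off_b[of e t]
    by (cases "e = b t") (simp_all add: k_def occupation_add occupation_point y_def)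
  then show ?thesis unfolding occupation_def x_def by metis
qed

end
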